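(* Suppose that for each Polish space $E$ and each $\mu\in\mathcal P(E)$ we are given a function $\mathcal P(E)\ni\nu\mapsto\alpha(\nu|\mu)\in[0,\infty]$, such that: (1) $\alpha(\mu|\mu)=0$; (2) $\alpha(\nu|\mu)=\infty$ whenever $\nu\in\mathcal P(E)$ is not absolutely continuous with respect to $\mu$; (3) $\alpha(\nu K\,|\,\mu K)\le\alpha(\nu|\mu)$ for all Polish spaces $E,F$, all $\mu,\nu\in\mathcal P(E)$ and every kernel $K$ from $E$ to $F$. For each Polish space $E$ and $\mu\in\mathcal P(E)$ define $$\rho_\mu(f):=\sup_{\nu\in\mathcal P(E)}\left(\int_E f\,d\nu-\alpha(\nu|\mu)\right),\qquad f\in B(E).$$ Then each $\rho_\mu$ is a law invariant risk measure (on $L^\infty(E,\mu)$). Moreover, for any Polish spaces $F$ and $G$, any $\mu\in\mathcal P(F)$, $\nu\in\mathcal P(G)$, and any $f\in B(F)$, $g\in B(G)$ with $\mu\circ f^{-1}=\nu\circ g^{-1}$, we have $\rho_\mu(f)=\rho_\nu(g)$.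
   Context: For a Polish space $E$, $\mathcal P(E)$ is the set of Borel probability measures on $E$ and $B(E)$ the set of bounded Borel functions on $E$. A kernel from $E$ to $F$ (Polish spaces) is a measurable map $E\ni x\mapsto K_x\in\mathcal P(F)$, and $\mu K(\cdot):=\int_E\mu(dx)K_x(\cdot)\in\mathcal P(F)$. A risk measure on $L^\infty(E,\mu)$ is a convex functional that is monotone ($f\le g$ $\mu$-a.e. implies $\rho_\mu(f)\le\rho_\mu(g)$), cash additive ($\rho_\mu(f+c)=\rho_\mu(f)+c$ for constants $c$) and normalized ($\rho_\mu(0)=0$); law invariant means $\rho_\mu(f)=\rho_\mu(g)$ whenever $\mu\circ f^{-1}=\mu\circ g^{-1}$. *)

theory Defs
  imports "HOL-Analysis.Analysis" "HOL-Probability.Probability"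
begin

definition Polish_space :: "'a topology \<Rightarrow> bool" where
  "Polish_space X \<longleftrightarrow> completely_metrizable_space X \<and> separable_space X"

definition borel_of :: "'a topology \<Rightarrow> 'a measure" where
  "borel_of X = sigma (topspace X) {U. openin X U}"

definition Prob :: "'a topology \<Rightarrow> 'a measure set" where
  "Prob X = space (prob_algebra (borel_of X))"

definition bdd_borel :: "'a topology \<Rightarrow> ('a \<Rightarrow> real) set" where
  "bdd_borel X = {f. f \<in> borel_measurable (borel_of X) \<and> bounded (f ` topspace X)}"

definition kernel :: "'a topology \<Rightarrow> 'b topology \<Rightarrow> ('a \<Rightarrow> 'b measure) set" where
  "kernel X Y = borel_of X \<rightarrow>\<^sub>M prob_algebra (borel_of Y)"

definition kcomp :: "'a measure \<Rightarrow> ('a \<Rightarrow> 'b measure) \<Rightarrow> 'b measure" where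
  "kcomp \<mu> K = \<mu> \<bind> K"

definition rho :: "('a topology \<Rightarrow> 'a measure \<Rightarrow> 'a measure \<Rightarrow> ennreal)
    \<Rightarrow> 'a topology \<Rightarrow> 'a measure \<Rightarrow> ('a \<Rightarrow> real) \<Rightarrow> ereal" where
  "rho \<alpha> X \<mu> f = (SUP \<nu>\<in>Prob X. ereal (integral\<^sup>L \<nu> f) - enn2ereal (\<alpha> X \<nu> \<mu>))"

text \<open>A functional on B(E) that is a (real-valued) risk measure on L-infinity(E,mu):
  finite, monotone w.r.t. mu-a.e. order (hence well defined on L-infinity), cash additive,
  normalized and convex.\<close>
definition risk_measure :: "'a topology \<Rightarrow> 'a measure \<Rightarrow> (('a \<Rightarrow> real) \<Rightarrow> ereal) \<Rightarrow> bool" where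
  "risk_measure X \<mu> r \<longleftrightarrow>
     (\<forall>f\<in>bdd_borel X. \<bar>r f\<bar> \<noteq> \<infinity>) \<and>
     (\<forall>f\<in>bdd_borel X. \<forall>g\<in>bdd_borel X. (AE x in \<mu>. f x \<le> g x) \<longrightarrow> r f \<le> r g) \<and>
     (\<forall>f\<in>bdd_borel X. \<forall>c::real. r (\<lambda>x. f x + c) = r f + ereal c) \<and>
     r (\<lambda>x. 0) = 0 \<and>
     (\<forall>f\<in>bdd_borel X. \<forall>g\<in>bdd_borel X. \<forall>t::real. 0 \<le> t \<and> t \<le> 1 \<longrightarrow>
        r (\<lambda>x. t * f x + (1 - t) * g x) \<le> ereal t * r f + ereal (1 - t) * r g)"

definition law_invariant :: "'a topology \<Rightarrow> 'a measure \<Rightarrow> (('a \<Rightarrow> real) \<Rightarrow> ereal) \<Rightarrow> bool" where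
  "law_invariant X \<mu> r \<longleftrightarrow>
     (\<forall>f\<in>bdd_borel X. \<forall>g\<in>bdd_borel X. distr \<mu> borel f = distr \<mu> borel g \<longrightarrow> r f = r g)"

end

theory Submission
  imports Defs
begin

text \<open>
  Each functional \<open>\<nu> \<mapsto> \<integral>f d\<nu> - \<alpha>(\<nu>|\<mu>)\<close> is affine in \<open>f\<close>, monotone in \<open>f\<close> on measures with
  finite penalty (these are absolutely continuous w.r.t. \<open>\<mu>\<close>) and shifted by \<open>c\<close> when \<open>f\<close> is;
  \<open>\<alpha>(\<mu>|\<mu>) = 0\<close> makes the supremum finite.

  For the transfer of \<open>\<rho>\<close> along equal laws, first let \<open>f\<close> and \<open>g\<close> take finitely many values.
  The kernel \<open>K x := \<nu>( \<cdot> | g = f x)\<close> satisfies \<open>\<mu>K = \<nu>\<close>, and for every \<open>\<xi> \<ll> \<mu>\<close> the law of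
  \<open>g\<close> under \<open>\<xi>K\<close> is the law of \<open>f\<close> under \<open>\<xi>\<close>. By the data processing inequality every term
  of the supremum defining \<open>\<rho>\<^sub>\<mu>(f)\<close> is thus dominated by a term of the one defining \<open>\<rho>\<^sub>\<nu>(g)\<close>.
  General bounded functions are rounded down to a grid of mesh \<open>\<epsilon>\<close>, which preserves equality of
  laws and changes \<open>\<rho>\<close> by at most \<open>\<epsilon>\<close>.
\<close>

lemma space_borel_of [simp]: "space (borel_of X) = topspace X"
  unfolding borel_of_def by (rule space_measure_of) (auto dest: openin_subset)

lemma ProbD:
  assumes "\<nu> \<in> Prob X"
  shows "prob_space \<nu>" "sets \<nu> = sets (borel_of X)" "space \<nu> = topspace X"
  using assms unfolding Prob_def space_prob_algebra
  by (auto dest: sets_eq_imp_space_eq)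

lemma measurable_Prob:
  assumes "h \<in> borel_measurable (borel_of X)" "\<nu> \<in> Prob X"
  shows "h \<in> borel_measurable \<nu>"
  using assms measurable_cong_sets[OF ProbD(2)[OF assms(2)] refl] by blast

lemma kcomp_Prob:
  assumes "K \<in> kernel X Y" "\<xi> \<in> Prob X"
  shows "kcomp \<xi> K \<in> Prob Y"
  unfolding kcomp_def Prob_def space_prob_algebra
  using assms unfolding kernel_def Prob_def by (simp add: sets_bind' prob_space_bind')

lemma bdd_borelD:
  assumes "f \<in> bdd_borel X"
  shows "f \<in> borel_measurable (borel_of X)" "\<exists>B. \<forall>x\<in>topspace X. \<bar>f x\<bar> \<le> B"
  using assms unfolding bdd_borel_def bounded_iff by auto

lemma bdd_borel_add_const:
  assumes "f \<in> bdd_borel X"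
  shows "(\<lambda>x. f x + c) \<in> bdd_borel X"
proof -
  obtain B where "\<forall>x\<in>topspace X. \<bar>f x\<bar> \<le> B" using bdd_borelD[OF assms] by auto
  then have "\<forall>x\<in>topspace X. norm (f x + c) \<le> B + \<bar>c\<bar>" by (auto intro: order_trans[OF abs_triangle_ineq])
  then show ?thesis using bdd_borelD(1)[OF assms] unfolding bdd_borel_def bounded_iff by auto
qed

lemma integrable_bdd_borel:
  assumes "f \<in> bdd_borel X" "\<nu> \<in> Prob X"
  shows "integrable \<nu> f"
proof -
  interpret prob_space \<nu> using ProbD[OF assms(2)] by simp
  obtain B where B: "\<forall>x\<in>topspace X. \<bar>f x\<bar> \<le> B" using bdd_borelD[OF assms(1)] by auto
  show ?thesis
  proof (rule integrable_const_bound[where B=B])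
    show "AE x in \<nu>. norm (f x) \<le> B" using B ProbD[OF assms(2)] by auto
    show "f \<in> borel_measurable \<nu>" using measurable_Prob bdd_borelD(1) assms by blast
  qed
qed

lemma integral_le_add_const:
  assumes "f \<in> bdd_borel X" "g \<in> bdd_borel X" "\<nu> \<in> Prob X"
    and "\<And>x. x \<in> topspace X \<Longrightarrow> f x \<le> g x + c"
  shows "integral\<^sup>L \<nu> f \<le> integral\<^sup>L \<nu> g + c"
proof -
  interpret prob_space \<nu> using ProbD[OF assms(3)] by simp
  have g: "integrable \<nu> g" using integrable_bdd_borel[OF assms(2,3)] .
  have "integral\<^sup>L \<nu> f \<le> integral\<^sup>L \<nu> (\<lambda>x. g x + c)"
    using assms(4) ProbD[OF assms(3)] integrable_bdd_borel[OF assms(1,3)] g by (intro integral_mono) auto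
  also have "\<dots> = integral\<^sup>L \<nu> g + c" using g by (simp add: prob_space)
  finally show ?thesis .
qed

lemma integral_finite_range:
  assumes "finite_measure M" "h \<in> borel_measurable M" "finite U" "h ` space M \<subseteq> U"
  shows "integral\<^sup>L M h = (\<Sum>c\<in>U. c * measure M (h -` {c} \<inter> space M))"
proof -
  interpret finite_measure M by fact
  have "integral\<^sup>L M h = integral\<^sup>L M (\<lambda>x. \<Sum>c\<in>U. c * indicator (h -` {c} \<inter> space M) x)"
  proof (rule Bochner_Integration.integral_cong[OF refl])
    fix x assume x: "x \<in> space M"
    then have "(\<Sum>c\<in>U. c * indicator (h -` {c} \<inter> space M) x) = (\<Sum>c\<in>U. if c = h x then c else 0)"
      by (intro sum.cong) (auto simp: indicator_def)
    also have "\<dots> = h x" using x assms(3,4) by auto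
    finally show "h x = (\<Sum>c\<in>U. c * indicator (h -` {c} \<inter> space M) x)" by simp
  qed
  also have "\<dots> = (\<Sum>c\<in>U. c * measure M (h -` {c} \<inter> space M))"
    using assms(2)
    by (subst Bochner_Integration.integral_sum)
      (auto simp: measurable_sets integrable_indicator_iff Int_absorb2 less_top[symmetric])
  finally show ?thesis .
qed

subsection \<open>The functional \<open>\<rho>\<close> as a risk measure\<close>

lemma integral_minus_penalty_le_rho:
  assumes "\<nu> \<in> Prob X"
  shows "ereal (integral\<^sup>L \<nu> f) - enn2ereal (\<alpha> X \<nu> \<mu>) \<le> rho \<alpha> X \<mu> f"
  unfolding rho_def using assms by (intro SUP_upper) auto

lemma ereal_minus_enn2ereal_cases:
  fixes a :: ennreal
  obtains "a = \<infinity>" "ereal r - enn2ereal a = -\<infinity>"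
    | b where "a = ennreal b" "b \<ge> 0" "ereal r - enn2ereal a = ereal (r - b)"
  by (cases a) (auto simp: enn2ereal_ennreal)

lemma rho_le_add_const:
  assumes "\<And>\<nu>. \<nu> \<in> Prob X \<Longrightarrow> \<alpha> X \<nu> \<mu> \<noteq> \<infinity> \<Longrightarrow> integral\<^sup>L \<nu> f \<le> integral\<^sup>L \<nu> g + c"
  shows "rho \<alpha> X \<mu> f \<le> rho \<alpha> X \<mu> g + ereal c"
  unfolding rho_def[of \<alpha> X \<mu> f]
proof (rule SUP_least)
  fix \<nu> assume \<nu>: "\<nu> \<in> Prob X"
  show "ereal (integral\<^sup>L \<nu> f) - enn2ereal (\<alpha> X \<nu> \<mu>) \<le> rho \<alpha> X \<mu> g + ereal c"
  proof (cases rule: ereal_minus_enn2ereal_cases[of "\<alpha> X \<nu> \<mu>" "integral\<^sup>L \<nu> f"])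
    case (2 b)
    have "ereal (integral\<^sup>L \<nu> f - b) \<le> ereal (integral\<^sup>L \<nu> g - b) + ereal c"
      using assms[OF \<nu>] 2 by simp
    also have "\<dots> \<le> rho \<alpha> X \<mu> g + ereal c"
      using integral_minus_penalty_le_rho[OF \<nu>, of g \<alpha> \<mu>] 2 by (intro add_right_mono) simp
    finally show ?thesis using 2 by simp
  qed simp
qed

lemma rho_finite:
  assumes "\<mu> \<in> Prob X" "\<alpha> X \<mu> \<mu> = 0" "f \<in> bdd_borel X"
  shows "\<exists>r. rho \<alpha> X \<mu> f = ereal r"
proof -
  obtain B where B: "\<forall>x\<in>topspace X. \<bar>f x\<bar> \<le> B" using bdd_borelD[OF assms(3)] by auto
  have "ereal (integral\<^sup>L \<mu> f) \<le> rho \<alpha> X \<mu> f"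
    using integral_minus_penalty_le_rho[OF assms(1), of f \<alpha> \<mu>] assms(2) by (simp add: zero_ennreal.rep_eq)
  moreover have "rho \<alpha> X \<mu> f \<le> ereal B"
    unfolding rho_def
  proof (rule SUP_least)
    fix \<nu> assume \<nu>: "\<nu> \<in> Prob X"
    interpret prob_space \<nu> using ProbD[OF \<nu>] by simp
    have "integral\<^sup>L \<nu> f \<le> integral\<^sup>L \<nu> (\<lambda>_. B)"
      using B ProbD[OF \<nu>] integrable_bdd_borel[OF assms(3) \<nu>] by (intro integral_mono) auto
    then have "integral\<^sup>L \<nu> f \<le> B" by (simp add: prob_space)
    then show "ereal (integral\<^sup>L \<nu> f) - enn2ereal (\<alpha> X \<nu> \<mu>) \<le> ereal B"
      by (cases rule: ereal_minus_enn2ereal_cases[of "\<alpha> X \<nu> \<mu>" "integral\<^sup>L \<nu> f"]) auto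
  qed
  ultimately show ?thesis by (cases "rho \<alpha> X \<mu> f") auto
qed

lemma rho_mono_AE:
  assumes \<mu>: "\<mu> \<in> Prob X"
    and ac: "\<And>\<nu>. \<nu> \<in> Prob X \<Longrightarrow> \<not> absolutely_continuous \<mu> \<nu> \<Longrightarrow> \<alpha> X \<nu> \<mu> = \<infinity>"
    and f: "f \<in> bdd_borel X" and g: "g \<in> bdd_borel X" and le: "AE x in \<mu>. f x \<le> g x"
  shows "rho \<alpha> X \<mu> f \<le> rho \<alpha> X \<mu> g"
proof -
  have "rho \<alpha> X \<mu> f \<le> rho \<alpha> X \<mu> g + ereal 0"
  proof (rule rho_le_add_const)
    fix \<nu> assume \<nu>: "\<nu> \<in> Prob X" and "\<alpha> X \<nu> \<mu> \<noteq> \<infinity>"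
    then have "absolutely_continuous \<mu> \<nu>" using ac by blast
    then have "AE x in \<nu>. f x \<le> g x"
      using absolutely_continuous_AE[OF _ _ le] ProbD(2)[OF \<nu>] ProbD(2)[OF \<mu>] by simp
    then show "integral\<^sup>L \<nu> f \<le> integral\<^sup>L \<nu> g + 0"
      using integrable_bdd_borel[OF f \<nu>] integrable_bdd_borel[OF g \<nu>] by (simp add: integral_mono_AE)
  qed
  then show ?thesis by simp
qed

lemma rho_add_const:
  assumes "\<mu> \<in> Prob X" "\<alpha> X \<mu> \<mu> = 0" and f: "f \<in> bdd_borel X"
  shows "rho \<alpha> X \<mu> (\<lambda>x. f x + c) = rho \<alpha> X \<mu> f + ereal c"
proof -
  have fc: "(\<lambda>x. f x + c) \<in> bdd_borel X" using bdd_borel_add_const[OF f] .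
  have "rho \<alpha> X \<mu> (\<lambda>x. f x + c) \<le> rho \<alpha> X \<mu> f + ereal c"
    by (rule rho_le_add_const, rule integral_le_add_const[OF fc f]) auto
  moreover have "rho \<alpha> X \<mu> f \<le> rho \<alpha> X \<mu> (\<lambda>x. f x + c) + ereal (-c)"
    by (rule rho_le_add_const, rule integral_le_add_const[OF f fc]) auto
  moreover obtain r s where "rho \<alpha> X \<mu> f = ereal r" "rho \<alpha> X \<mu> (\<lambda>x. f x + c) = ereal s"
    using rho_finite[where \<alpha>=\<alpha>, OF assms(1,2)] f fc by blast
  ultimately show ?thesis by simp
qed

lemma rho_zero:
  assumes "\<mu> \<in> Prob X" "\<alpha> X \<mu> \<mu> = 0"
  shows "rho \<alpha> X \<mu> (\<lambda>x. 0) = 0"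
proof (rule antisym)
  show "rho \<alpha> X \<mu> (\<lambda>x. 0) \<le> 0"
    unfolding rho_def
  proof (rule SUP_least)
    fix \<nu> :: "'a measure"
    show "ereal (integral\<^sup>L \<nu> (\<lambda>x. 0)) - enn2ereal (\<alpha> X \<nu> \<mu>) \<le> 0"
      by (cases rule: ereal_minus_enn2ereal_cases[of "\<alpha> X \<nu> \<mu>" "integral\<^sup>L \<nu> (\<lambda>x. 0)"]) auto
  qed
  show "0 \<le> rho \<alpha> X \<mu> (\<lambda>x. 0)"
    using integral_minus_penalty_le_rho[OF assms(1), of "\<lambda>x. 0" \<alpha> \<mu>] assms(2) by (simp add: zero_ennreal.rep_eq zero_ereal_def)
qed

lemma rho_convex:
  assumes "\<mu> \<in> Prob X" "\<alpha> X \<mu> \<mu> = 0" and f: "f \<in> bdd_borel X" and g: "g \<in> bdd_borel X"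
    and t: "0 \<le> t" "t \<le> 1"
  shows "rho \<alpha> X \<mu> (\<lambda>x. t * f x + (1 - t) * g x) \<le> ereal t * rho \<alpha> X \<mu> f + ereal (1 - t) * rho \<alpha> X \<mu> g"
proof -
  obtain rf rg where rf: "rho \<alpha> X \<mu> f = ereal rf" and rg: "rho \<alpha> X \<mu> g = ereal rg"
    using rho_finite[where \<alpha>=\<alpha>, OF assms(1,2)] f g by blast
  show ?thesis
    unfolding rho_def[of \<alpha> X \<mu> "\<lambda>x. t * f x + (1 - t) * g x"] rf rg
  proof (rule SUP_least)
    fix \<nu> assume \<nu>: "\<nu> \<in> Prob X"
    show "ereal (integral\<^sup>L \<nu> (\<lambda>x. t * f x + (1 - t) * g x)) - enn2ereal (\<alpha> X \<nu> \<mu>) \<le> ereal t * ereal rf + ereal (1 - t) * ereal rg"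
    proof (cases rule: ereal_minus_enn2ereal_cases[of "\<alpha> X \<nu> \<mu>" "integral\<^sup>L \<nu> (\<lambda>x. t * f x + (1 - t) * g x)"])
      case (2 b)
      have "integral\<^sup>L \<nu> f - b \<le> rf" "integral\<^sup>L \<nu> g - b \<le> rg"
        using integral_minus_penalty_le_rho[OF \<nu>, of f \<alpha> \<mu>] integral_minus_penalty_le_rho[OF \<nu>, of g \<alpha> \<mu>]
          rf rg 2 by simp_all
      then have "t * (integral\<^sup>L \<nu> f - b) + (1 - t) * (integral\<^sup>L \<nu> g - b) \<le> t * rf + (1 - t) * rg"
        using t by (intro add_mono mult_left_mono) auto
      moreover have "integral\<^sup>L \<nu> (\<lambda>x. t * f x + (1 - t) * g x) = t * integral\<^sup>L \<nu> f + (1 - t) * integral\<^sup>L \<nu> g"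
        using integrable_bdd_borel[OF f \<nu>] integrable_bdd_borel[OF g \<nu>] by simp
      ultimately show ?thesis using 2 by (simp add: algebra_simps)
    qed simp
  qed
qed

lemma risk_measure_rho:
  assumes "\<mu> \<in> Prob X" "\<alpha> X \<mu> \<mu> = 0"
    and "\<And>\<nu>. \<nu> \<in> Prob X \<Longrightarrow> \<not> absolutely_continuous \<mu> \<nu> \<Longrightarrow> \<alpha> X \<nu> \<mu> = \<infinity>"
  shows "risk_measure X \<mu> (rho \<alpha> X \<mu>)"
  unfolding risk_measure_def
  using rho_finite[where \<alpha>=\<alpha>, OF assms(1,2)] rho_mono_AE[where \<alpha>=\<alpha>, OF assms(1,3)] rho_add_const[where \<alpha>=\<alpha>, OF assms(1,2)]
    rho_zero[where \<alpha>=\<alpha>, OF assms(1,2)] rho_convex[where \<alpha>=\<alpha>, OF assms(1,2)]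
  by fastforce

subsection \<open>Transfer of \<open>\<rho>\<close> along a kernel\<close>

lemma rho_le_rho_kernel:
  fixes \<alpha> :: "'a topology \<Rightarrow> 'a measure \<Rightarrow> 'a measure \<Rightarrow> ennreal"
  assumes K: "K \<in> kernel F G" and \<mu>K: "kcomp \<mu> K = \<nu>"
    and integral_le: "\<And>\<xi>. \<xi> \<in> Prob F \<Longrightarrow> \<alpha> F \<xi> \<mu> \<noteq> \<infinity> \<Longrightarrow>
      integral\<^sup>L \<xi> f \<le> integral\<^sup>L (kcomp \<xi> K) g"
    and dpi: "\<And>\<xi>. \<xi> \<in> Prob F \<Longrightarrow> \<alpha> G (kcomp \<xi> K) (kcomp \<mu> K) \<le> \<alpha> F \<xi> \<mu>"
  shows "rho \<alpha> F \<mu> f \<le> rho \<alpha> G \<nu> g"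
  unfolding rho_def[of \<alpha> F \<mu> f]
proof (rule SUP_least)
  fix \<xi> assume \<xi>: "\<xi> \<in> Prob F"
  show "ereal (integral\<^sup>L \<xi> f) - enn2ereal (\<alpha> F \<xi> \<mu>) \<le> rho \<alpha> G \<nu> g"
  proof (cases "\<alpha> F \<xi> \<mu> = \<infinity>")
    case False
    have "ereal (integral\<^sup>L \<xi> f) - enn2ereal (\<alpha> F \<xi> \<mu>)
        \<le> ereal (integral\<^sup>L (kcomp \<xi> K) g) - enn2ereal (\<alpha> G (kcomp \<xi> K) \<nu>)"
      using integral_le[OF \<xi> False] dpi[OF \<xi>] \<mu>K
      by (intro ereal_minus_mono) (auto simp: less_eq_ennreal.rep_eq)
    also have "\<dots> \<le> rho \<alpha> G \<nu> g"
      by (rule integral_minus_penalty_le_rho[OF kcomp_Prob[OF K \<xi>]])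
    finally show ?thesis .
  qed simp
qed

locale finite_range_equal_law =
  fixes F :: "'a topology" and G :: "'b topology"
    and \<mu> :: "'a measure" and \<nu> :: "'b measure"
    and f :: "'a \<Rightarrow> real" and g :: "'b \<Rightarrow> real" and U :: "real set"
  assumes Prob_\<mu>: "\<mu> \<in> Prob F" and Prob_\<nu>: "\<nu> \<in> Prob G"
    and f_meas: "f \<in> borel_measurable (borel_of F)" and g_meas: "g \<in> borel_measurable (borel_of G)"
    and finite_U: "finite U" and f_range: "f ` topspace F \<subseteq> U" and g_range: "g ` topspace G \<subseteq> U"
    and equal_law: "distr \<mu> borel f = distr \<nu> borel g"
begin

definition level_f :: "real \<Rightarrow> 'a set" where
  "level_f c = f -` {c} \<inter> topspace F"

definition level_g :: "real \<Rightarrow> 'b set" where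
  "level_g c = g -` {c} \<inter> topspace G"

text \<open>On a \<open>\<nu>\<close>-null level set the conditional law is arbitrary; \<open>\<nu>\<close> itself is chosen.\<close>
definition cond_law :: "real \<Rightarrow> 'b measure" where
  "cond_law c = (if emeasure \<nu> (level_g c) = 0 then \<nu> else uniform_measure \<nu> (level_g c))"

definition coupling_kernel :: "'a \<Rightarrow> 'b measure" where
  "coupling_kernel x = cond_law (f x)"

lemma sets_level_f: "level_f c \<in> sets (borel_of F)"
  unfolding level_f_def using measurable_sets[OF f_meas, of "{c}"] by simp

lemma sets_level_g: "level_g c \<in> sets (borel_of G)"
  unfolding level_g_def using measurable_sets[OF g_meas, of "{c}"] by simp

lemma emeasure_level_f_eq: "emeasure \<mu> (level_f c) = emeasure \<nu> (level_g c)"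
proof -
  have "emeasure (distr \<mu> borel f) {c} = emeasure (distr \<nu> borel g) {c}"
    using equal_law by simp
  then show ?thesis
    unfolding level_f_def level_g_def
    using emeasure_distr[OF measurable_Prob[OF f_meas Prob_\<mu>], of "{c}"]
      emeasure_distr[OF measurable_Prob[OF g_meas Prob_\<nu>], of "{c}"] ProbD[OF Prob_\<mu>] ProbD[OF Prob_\<nu>]
    by simp
qed

lemma cond_law_Prob: "cond_law c \<in> Prob G"
  unfolding cond_law_def Prob_def space_prob_algebra
  using ProbD[OF Prob_\<nu>] finite_measure.emeasure_finite[OF prob_space.finite_measure, of \<nu>]
  by (auto intro!: prob_space_uniform_measure)

lemma coupling_kernel: "coupling_kernel \<in> kernel F G"
proof -
  have "f \<in> borel_of F \<rightarrow>\<^sub>M count_space U"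
    unfolding measurable_count_space_eq2[OF finite_U]
    using f_range sets_level_f unfolding level_f_def by auto
  then show ?thesis
    unfolding kernel_def coupling_kernel_def
    using finite_U cond_law_Prob unfolding Prob_def
    by (intro measurable_compose_countable'[where f="\<lambda>c x. cond_law c" and g=f])
      (auto intro: countable_finite)
qed

lemma emeasure_kcomp_coupling_kernel:
  assumes \<xi>: "\<xi> \<in> Prob F" and A: "A \<in> sets (borel_of G)"
  shows "emeasure (kcomp \<xi> coupling_kernel) A = (\<Sum>c\<in>U. emeasure (cond_law c) A * emeasure \<xi> (level_f c))"
proof -
  have "emeasure (kcomp \<xi> coupling_kernel) A = (\<integral>\<^sup>+x. emeasure (coupling_kernel x) A \<partial>\<xi>)"
    using \<xi> coupling_kernel A unfolding Prob_def kernel_def kcomp_def by (rule emeasure_bind_prob_algebra)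
  also have "\<dots> = (\<integral>\<^sup>+x. (\<Sum>c\<in>U. emeasure (cond_law c) A * indicator (level_f c) x) \<partial>\<xi>)"
  proof (rule nn_integral_cong)
    fix x assume "x \<in> space \<xi>"
    then have x: "x \<in> topspace F" using ProbD[OF \<xi>] by simp
    then have "(\<Sum>c\<in>U. emeasure (cond_law c) A * indicator (level_f c) x)
        = (\<Sum>c\<in>U. if c = f x then emeasure (cond_law c) A else 0)"
      by (intro sum.cong) (auto simp: indicator_def level_f_def)
    also have "\<dots> = emeasure (coupling_kernel x) A"
      using x f_range finite_U by (auto simp: coupling_kernel_def)
    finally show "emeasure (coupling_kernel x) A = (\<Sum>c\<in>U. emeasure (cond_law c) A * indicator (level_f c) x)"
      by simp
  qed
  also have "\<dots> = (\<Sum>c\<in>U. emeasure (cond_law c) A * emeasure \<xi> (level_f c))"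
    using sets_level_f ProbD[OF \<xi>]
    by (subst nn_integral_sum) (auto intro!: sum.cong nn_integral_cmult_indicator)
  finally show ?thesis .
qed

lemma emeasure_cond_law_mult:
  assumes A: "A \<in> sets (borel_of G)"
  shows "emeasure (cond_law c) A * emeasure \<nu> (level_g c) = emeasure \<nu> (level_g c \<inter> A)"
proof -
  interpret prob_space \<nu> using ProbD[OF Prob_\<nu>] by simp
  show ?thesis
  proof (cases "emeasure \<nu> (level_g c) = 0")
    case True
    then show ?thesis
      using emeasure_mono[of "level_g c \<inter> A" "level_g c" \<nu>] sets_level_g ProbD[OF Prob_\<nu>] by simp
  next
    case False
    then show ?thesis
      using sets_level_g A ProbD[OF Prob_\<nu>]
      by (simp add: cond_law_def ennreal_divide_times ennreal_divide_self emeasure_finite less_top[symmetric])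
  qed
qed

lemma kcomp_coupling_kernel: "kcomp \<mu> coupling_kernel = \<nu>"
proof (rule measure_eqI)
  show sets: "sets (kcomp \<mu> coupling_kernel) = sets \<nu>"
    using kcomp_Prob[OF coupling_kernel Prob_\<mu>] ProbD(2) Prob_\<nu> by metis
  fix A assume "A \<in> sets (kcomp \<mu> coupling_kernel)"
  then have A: "A \<in> sets (borel_of G)" using sets ProbD(2)[OF Prob_\<nu>] by simp
  have "emeasure (kcomp \<mu> coupling_kernel) A = (\<Sum>c\<in>U. emeasure \<nu> (level_g c \<inter> A))"
    using emeasure_kcomp_coupling_kernel[OF Prob_\<mu> A] emeasure_cond_law_mult[OF A]
    by (simp add: emeasure_level_f_eq)
  also have "\<dots> = emeasure \<nu> (\<Union>c\<in>U. level_g c \<inter> A)"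
    using sets_level_g A ProbD[OF Prob_\<nu>] finite_U
    by (intro sum_emeasure) (auto simp: disjoint_family_on_def level_g_def)
  also have "(\<Union>c\<in>U. level_g c \<inter> A) = A"
    using g_range sets.sets_into_space[OF A] unfolding level_g_def by auto
  finally show "emeasure (kcomp \<mu> coupling_kernel) A = emeasure \<nu> A" .
qed

lemma emeasure_kcomp_level_g:
  assumes \<xi>: "\<xi> \<in> Prob F" and ac: "absolutely_continuous \<mu> \<xi>" and d: "d \<in> U"
  shows "emeasure (kcomp \<xi> coupling_kernel) (level_g d) = emeasure \<xi> (level_f d)"
proof -
  have "emeasure (cond_law c) (level_g d) * emeasure \<xi> (level_f c) = (if c = d then emeasure \<xi> (level_f d) else 0)"
    for c
  proof (cases "emeasure \<nu> (level_g c) = 0")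
    case True
    then have "level_f c \<in> null_sets \<mu>"
      using emeasure_level_f_eq sets_level_f ProbD(2)[OF Prob_\<mu>] by auto
    then have "emeasure \<xi> (level_f c) = 0" using ac unfolding absolutely_continuous_def by auto
    then show ?thesis by auto
  next
    case False
    interpret prob_space \<nu> using ProbD[OF Prob_\<nu>] by simp
    have "level_g c \<inter> level_g d = (if c = d then level_g c else {})"
      by (auto simp: level_g_def)
    then have "emeasure (cond_law c) (level_g d) = (if c = d then 1 else 0)"
      using False sets_level_g ProbD[OF Prob_\<nu>]
      by (auto simp: cond_law_def emeasure_finite ennreal_divide_self less_top[symmetric])
    then show ?thesis by simp
  qed
  then show ?thesis
    using emeasure_kcomp_coupling_kernel[OF \<xi> sets_level_g] d finite_U by simp
qed

lemma integral_kcomp_coupling_kernel: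
  assumes \<xi>: "\<xi> \<in> Prob F" and ac: "absolutely_continuous \<mu> \<xi>"
  shows "integral\<^sup>L (kcomp \<xi> coupling_kernel) g = integral\<^sup>L \<xi> f"
proof -
  define \<eta> where "\<eta> = kcomp \<xi> coupling_kernel"
  have \<eta>: "\<eta> \<in> Prob G" unfolding \<eta>_def using kcomp_Prob[OF coupling_kernel \<xi>] .
  have fin: "finite_measure \<eta>" "finite_measure \<xi>"
    using ProbD(1)[OF \<eta>] ProbD(1)[OF \<xi>] by (auto intro: prob_space.finite_measure)
  have "integral\<^sup>L \<eta> g = (\<Sum>c\<in>U. c * measure \<eta> (level_g c))"
    using integral_finite_range[OF fin(1) measurable_Prob[OF g_meas \<eta>] finite_U] g_range ProbD[OF \<eta>]
    by (simp add: level_g_def)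
  also have "\<dots> = (\<Sum>c\<in>U. c * measure \<xi> (level_f c))"
    using emeasure_kcomp_level_g[OF \<xi> ac] by (simp add: measure_def \<eta>_def)
  also have "\<dots> = integral\<^sup>L \<xi> f"
    using integral_finite_range[OF fin(2) measurable_Prob[OF f_meas \<xi>] finite_U] f_range ProbD[OF \<xi>]
    by (simp add: level_f_def)
  finally show ?thesis unfolding \<eta>_def .
qed

end

lemma rho_le_of_finite_range_equal_law:
  fixes \<alpha> :: "'a topology \<Rightarrow> 'a measure \<Rightarrow> 'a measure \<Rightarrow> ennreal"
  assumes "finite_range_equal_law F G \<mu> \<nu> f g U"
    and ac: "\<And>\<xi>. \<xi> \<in> Prob F \<Longrightarrow> \<not> absolutely_continuous \<mu> \<xi> \<Longrightarrow> \<alpha> F \<xi> \<mu> = \<infinity>"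
    and dpi: "\<And>\<xi> K. \<xi> \<in> Prob F \<Longrightarrow> K \<in> kernel F G \<Longrightarrow> \<alpha> G (kcomp \<xi> K) (kcomp \<mu> K) \<le> \<alpha> F \<xi> \<mu>"
  shows "rho \<alpha> F \<mu> f \<le> rho \<alpha> G \<nu> g"
proof -
  interpret finite_range_equal_law F G \<mu> \<nu> f g U by fact
  show ?thesis
    using coupling_kernel kcomp_coupling_kernel
  proof (rule rho_le_rho_kernel)
    fix \<xi> assume "\<xi> \<in> Prob F" "\<alpha> F \<xi> \<mu> \<noteq> \<infinity>"
    then show "integral\<^sup>L \<xi> f \<le> integral\<^sup>L (kcomp \<xi> coupling_kernel) g"
      using ac integral_kcomp_coupling_kernel by fastforce
  qed (use dpi coupling_kernel in blast)
qed

subsection \<open>Discretisation and transfer along equal laws\<close>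

definition grid_floor :: "real \<Rightarrow> real \<Rightarrow> real" where
  "grid_floor e t = e * of_int \<lfloor>t / e\<rfloor>"

lemma grid_floor_le:
  assumes "0 < e" shows "grid_floor e t \<le> t"
proof -
  have "e * of_int \<lfloor>t / e\<rfloor> \<le> e * (t / e)" using assms by (intro mult_left_mono) auto
  then show ?thesis unfolding grid_floor_def using assms by simp
qed

lemma le_grid_floor_add:
  assumes "0 < e" shows "t \<le> grid_floor e t + e"
proof -
  have "e * (t / e) \<le> e * (of_int \<lfloor>t / e\<rfloor> + 1)" using assms by (intro mult_left_mono) linarith+
  then show ?thesis unfolding grid_floor_def using assms by (simp add: distrib_left)
qed

lemma borel_measurable_grid_floor: "grid_floor e \<in> borel_measurable borel"
  unfolding grid_floor_def by measurable

lemma grid_floor_mem: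
  assumes "0 < e" "\<bar>t\<bar> \<le> B"
  shows "grid_floor e t \<in> (\<lambda>k. e * of_int k) ` {\<lfloor>-B / e\<rfloor>..\<lfloor>B / e\<rfloor>}"
proof -
  have "-B / e \<le> t / e" "t / e \<le> B / e"
    using assms divide_right_mono[of "-B" t e] divide_right_mono[of t B e] by auto
  then have "\<lfloor>t / e\<rfloor> \<in> {\<lfloor>-B / e\<rfloor>..\<lfloor>B / e\<rfloor>}" by (auto intro: floor_mono)
  then show ?thesis unfolding grid_floor_def by auto
qed

lemma bdd_borel_grid_floor:
  assumes "0 < e" "f \<in> bdd_borel X"
  shows "(\<lambda>x. grid_floor e (f x)) \<in> bdd_borel X"
proof -
  obtain B where B: "\<forall>x\<in>topspace X. \<bar>f x\<bar> \<le> B" using bdd_borelD[OF assms(2)] by auto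
  have "norm (grid_floor e (f x)) \<le> B + e" if "x \<in> topspace X" for x
    using B that grid_floor_le[OF assms(1), of "f x"] le_grid_floor_add[OF assms(1), of "f x"] by auto
  then show ?thesis
    using measurable_compose[OF bdd_borelD(1)[OF assms(2)] borel_measurable_grid_floor]
    unfolding bdd_borel_def bounded_iff by (auto simp: o_def)
qed

lemma rho_le_of_equal_law:
  fixes \<alpha> :: "'a topology \<Rightarrow> 'a measure \<Rightarrow> 'a measure \<Rightarrow> ennreal"
  assumes \<mu>: "\<mu> \<in> Prob F" and \<nu>: "\<nu> \<in> Prob G"
    and ac: "\<And>\<xi>. \<xi> \<in> Prob F \<Longrightarrow> \<not> absolutely_continuous \<mu> \<xi> \<Longrightarrow> \<alpha> F \<xi> \<mu> = \<infinity>"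
    and dpi: "\<And>\<xi> K. \<xi> \<in> Prob F \<Longrightarrow> K \<in> kernel F G \<Longrightarrow> \<alpha> G (kcomp \<xi> K) (kcomp \<mu> K) \<le> \<alpha> F \<xi> \<mu>"
    and f: "f \<in> bdd_borel F" and g: "g \<in> bdd_borel G"
    and law: "distr \<mu> borel f = distr \<nu> borel g"
  shows "rho \<alpha> F \<mu> f \<le> rho \<alpha> G \<nu> g"
proof (rule ereal_le_epsilon2)
  fix e :: real assume e: "0 < e"
  define f' where "f' x = grid_floor e (f x)" for x
  define g' where "g' x = grid_floor e (g x)" for x
  have f': "f' \<in> bdd_borel F" and g': "g' \<in> bdd_borel G"
    unfolding f'_def g'_def using bdd_borel_grid_floor[OF e] f g by auto
  obtain B1 where B1: "\<forall>x\<in>topspace F. \<bar>f x\<bar> \<le> B1" using bdd_borelD(2)[OF f] by blast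
  obtain B2 where B2: "\<forall>x\<in>topspace G. \<bar>g x\<bar> \<le> B2" using bdd_borelD(2)[OF g] by blast
  define B where "B = max B1 B2"
  have "finite_range_equal_law F G \<mu> \<nu> f' g' ((\<lambda>k. e * of_int k) ` {\<lfloor>-B / e\<rfloor>..\<lfloor>B / e\<rfloor>})"
  proof
    show "f' ` topspace F \<subseteq> (\<lambda>k. e * of_int k) ` {\<lfloor>-B / e\<rfloor>..\<lfloor>B / e\<rfloor>}"
      using B1 grid_floor_mem[OF e] unfolding f'_def B_def by force
    show "g' ` topspace G \<subseteq> (\<lambda>k. e * of_int k) ` {\<lfloor>-B / e\<rfloor>..\<lfloor>B / e\<rfloor>}"
      using B2 grid_floor_mem[OF e] unfolding g'_def B_def by force
    show "distr \<mu> borel f' = distr \<nu> borel g'"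
      unfolding f'_def[abs_def] g'_def[abs_def]
      using distr_distr[OF borel_measurable_grid_floor measurable_Prob[OF bdd_borelD(1)[OF f] \<mu>]]
        distr_distr[OF borel_measurable_grid_floor measurable_Prob[OF bdd_borelD(1)[OF g] \<nu>]] law
      by (simp add: o_def)
  qed (use \<mu> \<nu> f' g' bdd_borelD(1) in auto)
  then have discrete: "rho \<alpha> F \<mu> f' \<le> rho \<alpha> G \<nu> g'"
    using ac dpi by (rule rho_le_of_finite_range_equal_law)
  have "rho \<alpha> F \<mu> f \<le> rho \<alpha> F \<mu> f' + ereal e"
    by (rule rho_le_add_const, rule integral_le_add_const[OF f f'])
      (auto simp: f'_def le_grid_floor_add[OF e])
  also have "\<dots> \<le> rho \<alpha> G \<nu> g' + ereal e"
    using discrete by (rule add_right_mono)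
  also have "rho \<alpha> G \<nu> g' \<le> rho \<alpha> G \<nu> g + ereal 0"
    by (rule rho_le_add_const, rule integral_le_add_const[OF g' g])
      (auto simp: g'_def grid_floor_le[OF e])
  then have "rho \<alpha> G \<nu> g' + ereal e \<le> rho \<alpha> G \<nu> g + ereal e"
    by (intro add_right_mono) simp
  finally show "rho \<alpha> F \<mu> f \<le> rho \<alpha> G \<nu> g + ereal e" .
qed

theorem theorem2p7:
  fixes \<alpha> :: "real topology \<Rightarrow> real measure \<Rightarrow> real measure \<Rightarrow> ennreal"
  assumes refl: "\<And>E \<mu>. Polish_space E \<Longrightarrow> \<mu> \<in> Prob E \<Longrightarrow> \<alpha> E \<mu> \<mu> = 0"
    and ac: "\<And>E \<mu> \<nu>. Polish_space E \<Longrightarrow> \<mu> \<in> Prob E \<Longrightarrow> \<nu> \<in> Prob E \<Longrightarrow>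
               \<not> absolutely_continuous \<mu> \<nu> \<Longrightarrow> \<alpha> E \<nu> \<mu> = \<infinity>"
    and dpi: "\<And>E F \<mu> \<nu> K. Polish_space E \<Longrightarrow> Polish_space F \<Longrightarrow> \<mu> \<in> Prob E \<Longrightarrow> \<nu> \<in> Prob E \<Longrightarrow>
               K \<in> kernel E F \<Longrightarrow> \<alpha> F (kcomp \<nu> K) (kcomp \<mu> K) \<le> \<alpha> E \<nu> \<mu>"
  shows "(\<forall>E \<mu>. Polish_space E \<and> \<mu> \<in> Prob E \<longrightarrow>
            risk_measure E \<mu> (rho \<alpha> E \<mu>) \<and> law_invariant E \<mu> (rho \<alpha> E \<mu>)) \<and>
         (\<forall>F G \<mu> \<nu> f g. Polish_space F \<and> Polish_space G \<and> \<mu> \<in> Prob F \<and> \<nu> \<in> Prob G \<and>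
            f \<in> bdd_borel F \<and> g \<in> bdd_borel G \<and> distr \<mu> borel f = distr \<nu> borel g \<longrightarrow>
            rho \<alpha> F \<mu> f = rho \<alpha> G \<nu> g)"
proof -
  have transfer: "rho \<alpha> F \<mu> f = rho \<alpha> G \<nu> g"
    if F: "Polish_space F" and G: "Polish_space G" and \<mu>: "\<mu> \<in> Prob F" and \<nu>: "\<nu> \<in> Prob G"
      and f: "f \<in> bdd_borel F" and g: "g \<in> bdd_borel G" and law: "distr \<mu> borel f = distr \<nu> borel g"
    for F G \<mu> \<nu> f g
  proof (rule antisym)
    show "rho \<alpha> F \<mu> f \<le> rho \<alpha> G \<nu> g"
      by (rule rho_le_of_equal_law[where \<alpha>=\<alpha>, OF \<mu> \<nu> ac[OF F \<mu>] dpi[OF F G \<mu>] f g law])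
    show "rho \<alpha> G \<nu> g \<le> rho \<alpha> F \<mu> f"
      by (rule rho_le_of_equal_law[where \<alpha>=\<alpha>, OF \<nu> \<mu> ac[OF G \<nu>] dpi[OF G F \<nu>] g f law[symmetric]])
  qed
  moreover have "risk_measure E \<mu> (rho \<alpha> E \<mu>)" if "Polish_space E" "\<mu> \<in> Prob E" for E \<mu>
    using risk_measure_rho[where \<alpha>=\<alpha>, OF that(2) refl[OF that] ac[OF that]] .
  moreover have "law_invariant E \<mu> (rho \<alpha> E \<mu>)" if "Polish_space E" "\<mu> \<in> Prob E" for E \<mu>
    using that transfer unfolding law_invariant_def by blast
  ultimately show ?thesis by blast
qed

end
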